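(* Suppose $0\le\alpha_3\le\alpha_2\le\alpha_1\le\pi/4$, and define $\zeta_0=\cos\alpha_1\cos\alpha_2\cos\alpha_3-\mathrm{i}\sin\alpha_1\sin\alpha_2\sin\alpha_3$, $\zeta_1=\cos\alpha_1\sin\alpha_2\sin\alpha_3-\mathrm{i}\sin\alpha_1\cos\alpha_2\cos\alpha_3$, $\zeta_2=\sin\alpha_1\cos\alpha_2\sin\alpha_3-\mathrm{i}\cos\alpha_1\sin\alpha_2\cos\alpha_3$, $\zeta_3=\sin\alpha_1\sin\alpha_2\cos\alpha_3-\mathrm{i}\cos\alpha_1\cos\alpha_2\sin\alpha_3$. Then $|\zeta_0|\ge|\zeta_1|\ge|\zeta_2|\ge|\zeta_3|\ge0$. The first inequality is an equality iff $\alpha_1=\pi/4$; the second iff $\alpha_2=\alpha_1$; the third iff $\alpha_1=\pi/4$ or $\alpha_3=\alpha_2$; the last iff $\alpha_2=\alpha_3=0$.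
   Context: The numbers $|\zeta_0|,|\zeta_1|,|\zeta_2|,|\zeta_3|$ are the Schmidt coefficients of the two-qubit unitary $U(\alpha_1,\alpha_2,\alpha_3)=\exp[-\mathrm{i}\sum_{k=1}^3\alpha_k\sigma_k\otimes\sigma_k]=\sum_{k=0}^3\zeta_k\sigma_k\otimes\sigma_k$ ($\sigma_0=I$, $\sigma_k$ Pauli matrices), i.e. of its Choi state with respect to the bipartition $AA'|BB'$. *)

theory Defs
  imports Complex_Main
begin

text \<open>The coefficients zeta_k(a1,a2,a3) of U = sum_k zeta_k sigma_k (x) sigma_k.\<close>

definition zeta0 :: "real \<Rightarrow> real \<Rightarrow> real \<Rightarrow> complex" where
  "zeta0 a1 a2 a3 = complex_of_real (cos a1 * cos a2 * cos a3) - \<i> * complex_of_real (sin a1 * sin a2 * sin a3)"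

definition zeta1 :: "real \<Rightarrow> real \<Rightarrow> real \<Rightarrow> complex" where
  "zeta1 a1 a2 a3 = complex_of_real (cos a1 * sin a2 * sin a3) - \<i> * complex_of_real (sin a1 * cos a2 * cos a3)"

definition zeta2 :: "real \<Rightarrow> real \<Rightarrow> real \<Rightarrow> complex" where
  "zeta2 a1 a2 a3 = complex_of_real (sin a1 * cos a2 * sin a3) - \<i> * complex_of_real (cos a1 * sin a2 * cos a3)"

definition zeta3 :: "real \<Rightarrow> real \<Rightarrow> real \<Rightarrow> complex" where
  "zeta3 a1 a2 a3 = complex_of_real (sin a1 * sin a2 * cos a3) - \<i> * complex_of_real (cos a1 * cos a2 * sin a3)"

end

theory Submission
  imports Defs
begin

text \<open>
  Each \<open>|\<zeta>\<^sub>k|\<^sup>2\<close> is a sum of two squared triple products of sines and cosines, and the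
  differences of consecutive ones factor by the addition theorems:
  \<open>|\<zeta>\<^sub>0|\<^sup>2 - |\<zeta>\<^sub>1|\<^sup>2 = cos 2\<alpha>\<^sub>1 cos(\<alpha>\<^sub>2+\<alpha>\<^sub>3) cos(\<alpha>\<^sub>2-\<alpha>\<^sub>3)\<close>,
  \<open>|\<zeta>\<^sub>1|\<^sup>2 - |\<zeta>\<^sub>2|\<^sup>2 = cos 2\<alpha>\<^sub>3 sin(\<alpha>\<^sub>1+\<alpha>\<^sub>2) sin(\<alpha>\<^sub>1-\<alpha>\<^sub>2)\<close> and
  \<open>|\<zeta>\<^sub>2|\<^sup>2 - |\<zeta>\<^sub>3|\<^sup>2 = cos 2\<alpha>\<^sub>1 sin(\<alpha>\<^sub>2+\<alpha>\<^sub>3) sin(\<alpha>\<^sub>2-\<alpha>\<^sub>3)\<close>.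
  For ordered angles in \<open>[0, \<pi>/4]\<close> every factor is nonnegative, and reading off when one
  of them vanishes gives the equality cases.
\<close>

lemma cos_eq_0_iff_eq_pi_half:
  fixes x :: real
  assumes "0 \<le> x" "x \<le> pi / 2"
  shows "cos x = 0 \<longleftrightarrow> x = pi / 2"
proof
  show "x = pi / 2" if "cos x = 0"
    using that assms cos_gt_zero_pi[of x] pi_gt_zero by force
qed (simp only: cos_pi_half)

lemma sin_eq_0_iff_eq_0:
  fixes x :: real
  assumes "0 \<le> x" "x < pi"
  shows "sin x = 0 \<longleftrightarrow> x = 0"
  using assms sin_gt_zero[of x] by (cases "x = 0") auto

lemma le_and_eq_iff_of_power2_diff:
  fixes x y d :: real
  assumes "0 \<le> x" "0 \<le> y" "x\<^sup>2 - y\<^sup>2 = d" "0 \<le> d"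
  shows "y \<le> x \<and> (x = y \<longleftrightarrow> d = 0)"
  using assms by (auto intro: power2_le_imp_le)

lemma norm_of_real_minus_i_mult_sq:
  "(cmod (complex_of_real x - \<i> * complex_of_real y))\<^sup>2 = x\<^sup>2 + y\<^sup>2"
  by (simp add: cmod_power2)

lemma norm_zeta0_sq_minus_norm_zeta1_sq:
  "(cmod (zeta0 a1 a2 a3))\<^sup>2 - (cmod (zeta1 a1 a2 a3))\<^sup>2 = cos (2 * a1) * cos (a2 + a3) * cos (a2 - a3)"
  unfolding zeta0_def zeta1_def norm_of_real_minus_i_mult_sq cos_double cos_add cos_diff
  by (simp add: power2_eq_square algebra_simps)

lemma norm_zeta1_sq_minus_norm_zeta2_sq:
  "(cmod (zeta1 a1 a2 a3))\<^sup>2 - (cmod (zeta2 a1 a2 a3))\<^sup>2 = cos (2 * a3) * sin (a1 + a2) * sin (a1 - a2)"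
  unfolding zeta1_def zeta2_def norm_of_real_minus_i_mult_sq cos_double sin_add sin_diff
  by (simp add: power2_eq_square algebra_simps)

lemma norm_zeta2_sq_minus_norm_zeta3_sq:
  "(cmod (zeta2 a1 a2 a3))\<^sup>2 - (cmod (zeta3 a1 a2 a3))\<^sup>2 = cos (2 * a1) * sin (a2 + a3) * sin (a2 - a3)"
  unfolding zeta2_def zeta3_def norm_of_real_minus_i_mult_sq cos_double sin_add sin_diff
  by (simp add: power2_eq_square algebra_simps)

lemma zeta3_eq_0_iff:
  "zeta3 a1 a2 a3 = 0 \<longleftrightarrow> sin a1 * sin a2 * cos a3 = 0 \<and> cos a1 * cos a2 * sin a3 = 0"
  by (simp add: zeta3_def complex_eq_iff)

context
  fixes a1 a2 a3 :: real
  assumes angles_ordered: "0 \<le> a3" "a3 \<le> a2" "a2 \<le> a1" "a1 \<le> pi / 4"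
begin

lemma cos_double_a1_eq_0_iff: "cos (2 * a1) = 0 \<longleftrightarrow> a1 = pi / 4"
  using cos_eq_0_iff_eq_pi_half[of "2 * a1"] angles_ordered pi_gt_zero by auto

lemma norm_zeta1_le_norm_zeta0:
  "cmod (zeta1 a1 a2 a3) \<le> cmod (zeta0 a1 a2 a3)
   \<and> (cmod (zeta0 a1 a2 a3) = cmod (zeta1 a1 a2 a3) \<longleftrightarrow> a1 = pi / 4)"
proof -
  have signs: "0 \<le> cos (2 * a1)" "0 \<le> cos (a2 + a3)" "0 < cos (a2 - a3)"
    using angles_ordered pi_gt_zero by (intro cos_ge_zero cos_gt_zero_pi; linarith)+
  have "cos (a2 + a3) = 0 \<Longrightarrow> a1 = pi / 4"
    using cos_eq_0_iff_eq_pi_half[of "a2 + a3"] angles_ordered pi_gt_zero by auto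
  then have "cos (2 * a1) * cos (a2 + a3) * cos (a2 - a3) = 0 \<longleftrightarrow> a1 = pi / 4"
    using signs cos_double_a1_eq_0_iff by auto
  with signs show ?thesis
    using le_and_eq_iff_of_power2_diff[OF norm_ge_zero norm_ge_zero norm_zeta0_sq_minus_norm_zeta1_sq]
    by auto
qed

lemma norm_zeta2_le_norm_zeta1:
  "cmod (zeta2 a1 a2 a3) \<le> cmod (zeta1 a1 a2 a3)
   \<and> (cmod (zeta1 a1 a2 a3) = cmod (zeta2 a1 a2 a3) \<longleftrightarrow> a2 = a1)"
proof -
  have signs: "0 \<le> cos (2 * a3)" "0 \<le> sin (a1 + a2)" "0 \<le> sin (a1 - a2)"
    using angles_ordered pi_gt_zero by (intro cos_ge_zero sin_ge_zero; linarith)+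
  have "cos (2 * a3) = 0 \<Longrightarrow> a2 = a1"
    using cos_eq_0_iff_eq_pi_half[of "2 * a3"] angles_ordered pi_gt_zero by auto
  moreover have "sin (a1 + a2) = 0 \<Longrightarrow> a2 = a1"
    using sin_eq_0_iff_eq_0[of "a1 + a2"] angles_ordered pi_gt_zero by auto
  moreover have "sin (a1 - a2) = 0 \<longleftrightarrow> a2 = a1"
    using sin_eq_0_iff_eq_0[of "a1 - a2"] angles_ordered pi_gt_zero by auto
  ultimately have "cos (2 * a3) * sin (a1 + a2) * sin (a1 - a2) = 0 \<longleftrightarrow> a2 = a1"
    by auto
  with signs show ?thesis
    using le_and_eq_iff_of_power2_diff[OF norm_ge_zero norm_ge_zero norm_zeta1_sq_minus_norm_zeta2_sq]
    by auto
qed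

lemma norm_zeta3_le_norm_zeta2:
  "cmod (zeta3 a1 a2 a3) \<le> cmod (zeta2 a1 a2 a3)
   \<and> (cmod (zeta2 a1 a2 a3) = cmod (zeta3 a1 a2 a3) \<longleftrightarrow> a1 = pi / 4 \<or> a3 = a2)"
proof -
  have signs: "0 \<le> cos (2 * a1)" "0 \<le> sin (a2 + a3)" "0 \<le> sin (a2 - a3)"
    using angles_ordered pi_gt_zero by (intro cos_ge_zero sin_ge_zero; linarith)+
  have "sin (a2 + a3) = 0 \<Longrightarrow> a3 = a2"
    using sin_eq_0_iff_eq_0[of "a2 + a3"] angles_ordered pi_gt_zero by auto
  moreover have "sin (a2 - a3) = 0 \<longleftrightarrow> a3 = a2"
    using sin_eq_0_iff_eq_0[of "a2 - a3"] angles_ordered pi_gt_zero by auto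
  ultimately have "cos (2 * a1) * sin (a2 + a3) * sin (a2 - a3) = 0 \<longleftrightarrow> a1 = pi / 4 \<or> a3 = a2"
    using cos_double_a1_eq_0_iff by auto
  with signs show ?thesis
    using le_and_eq_iff_of_power2_diff[OF norm_ge_zero norm_ge_zero norm_zeta2_sq_minus_norm_zeta3_sq]
    by auto
qed

lemma norm_zeta3_eq_0_iff: "cmod (zeta3 a1 a2 a3) = 0 \<longleftrightarrow> a2 = 0 \<and> a3 = 0"
proof -
  have "0 < cos a1" "0 < cos a2" "0 < cos a3"
    using angles_ordered pi_gt_zero by (intro cos_gt_zero_pi; linarith)+
  moreover have "sin a1 = 0 \<longleftrightarrow> a1 = 0" "sin a2 = 0 \<longleftrightarrow> a2 = 0" "sin a3 = 0 \<longleftrightarrow> a3 = 0"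
    using angles_ordered pi_gt_zero by (intro sin_eq_0_iff_eq_0; linarith)+
  ultimately show ?thesis
    using zeta3_eq_0_iff angles_ordered pi_gt_zero by auto
qed

end

theorem lemma8:
  fixes a1 a2 a3 :: real
  assumes "0 \<le> a3" "a3 \<le> a2" "a2 \<le> a1" "a1 \<le> pi / 4"
  shows "cmod (zeta0 a1 a2 a3) \<ge> cmod (zeta1 a1 a2 a3)
       \<and> cmod (zeta1 a1 a2 a3) \<ge> cmod (zeta2 a1 a2 a3)
       \<and> cmod (zeta2 a1 a2 a3) \<ge> cmod (zeta3 a1 a2 a3)
       \<and> cmod (zeta3 a1 a2 a3) \<ge> 0
       \<and> (cmod (zeta0 a1 a2 a3) = cmod (zeta1 a1 a2 a3) \<longleftrightarrow> a1 = pi / 4)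
       \<and> (cmod (zeta1 a1 a2 a3) = cmod (zeta2 a1 a2 a3) \<longleftrightarrow> a2 = a1)
       \<and> (cmod (zeta2 a1 a2 a3) = cmod (zeta3 a1 a2 a3) \<longleftrightarrow> a1 = pi / 4 \<or> a3 = a2)
       \<and> (cmod (zeta3 a1 a2 a3) = 0 \<longleftrightarrow> a2 = 0 \<and> a3 = 0)"
  using norm_zeta1_le_norm_zeta0[OF assms] norm_zeta2_le_norm_zeta1[OF assms]
    norm_zeta3_le_norm_zeta2[OF assms] norm_zeta3_eq_0_iff[OF assms]
  by simp

end
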